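(* Let $K$ be any real cubic number field. For $(i,j),(k,l)\in Ind$, let $\theta(i,j)$ denote the unique element of $\{0,1,2\}\setminus\{i,j\}$. If $(k,l)\neq(i,\theta(i,j))$ and $(k,l)\neq(\theta(i,j),i)$, then there exists $(\alpha,\beta)\in\Delta_K$ such that $\varepsilon_K(\alpha,\beta)=(i,j)$ and $\varepsilon_K(T_K(\alpha,\beta))=(k,l)$.
   Context: Let $K\subset\mathbb{R}$ be a real cubic number field, $N=N_{K/\mathbb{Q}}$ its norm. Fix $r=p/q$ with $p,q$ positive coprime integers and $3\nmid p$. Let $\Delta_K=\{(\alpha,\beta)\in K^2:\ 1,\alpha,\beta \text{ linearly independent over }\mathbb{Q},\ \alpha,\beta>0,\ \alpha+\beta<1\}$ and $Ind=\{(i,j): i,j\in\{0,1,2\},\ i\neq j\}$. Let $\Delta=\{(x,y)\in\mathbb{R}^2: x,y\ge 0,\ x+y\le 1\}$ and $\triangle(1,2)=\{(x,y)\in\Delta: x\ge y\}$, $\triangle(2,1)=\{x\le y\}$, $\triangle(0,1)=\{2x+y-1\le 0\}$, $\triangle(1,0)=\{2x+y-1\ge 0\}$, $\triangle(0,2)=\{x+2y-1\le0\}$, $\triangle(2,0)=\{x+2y-1\ge 0\}$ (all subsets of $\Delta$). Maps $T_{(i,j)}:\triangle(i,j)\to\Delta$: $T_{(1,2)}(x,y)=(\frac{x-y}{1-y},\frac{y}{1-y})$, $T_{(2,1)}(x,y)=(\frac{x}{1-x},\frac{y-x}{1-x})$, $T_{(0,1)}(x,y)=(\frac{x}{1-x},\frac{y}{1-x})$,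 $T_{(1,0)}(x,y)=(\frac{2x+y-1}{x+y},\frac{y}{x+y})$, $T_{(0,2)}(x,y)=(\frac{x}{1-y},\frac{y}{1-y})$, $T_{(2,0)}(x,y)=(\frac{x}{x+y},\frac{x+2y-1}{x+y})$. For $(\alpha,\beta)\in\Delta_K$ put $\gamma=1-\alpha-\beta$ and $v_{\{1,2\}}=\frac{\alpha^r\beta^r}{|N(\alpha)N(\beta)|}$, $v_{\{0,1\}}=\frac{\alpha^r\gamma^r}{|N(\alpha)N(\gamma)|}$, $v_{\{0,2\}}=\frac{\beta^r\gamma^r}{|N(\beta)N(\gamma)|}$; the maximum is attained at a unique pair $\{i_0,j_0\}$. $\varepsilon_K(\alpha,\beta)$ is the ordered pair $(i,j)\in Ind$ with $\{i,j\}=\{i_0,j_0\}$ and $(\alpha,\beta)\in\triangle(i,j)$, and $T_K(\alpha,\beta)=T_{\varepsilon_K(\alpha,\beta)}(\alpha,\beta)$ (a map $\Delta_K\to\Delta_K$). *)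

theory Defs
  imports Complex_Main
begin

definition subfield_real :: "real set \<Rightarrow> bool" where
  "subfield_real K \<longleftrightarrow> 0 \<in> K \<and> 1 \<in> K \<and>
     (\<forall>x\<in>K. \<forall>y\<in>K. x + y \<in> K \<and> x * y \<in> K) \<and>
     (\<forall>x\<in>K. - x \<in> K) \<and> (\<forall>x\<in>K. x \<noteq> 0 \<longrightarrow> inverse x \<in> K)"

definition Q_lin_indep3 :: "real \<Rightarrow> real \<Rightarrow> real \<Rightarrow> bool" where
  "Q_lin_indep3 a b c \<longleftrightarrow>
     (\<forall>x\<in>\<rat>. \<forall>y\<in>\<rat>. \<forall>z\<in>\<rat>. x * a + y * b + z * c = 0 \<longrightarrow> x = 0 \<and> y = 0 \<and> z = 0)"

definition real_cubic_field :: "real set \<Rightarrow> bool" where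
  "real_cubic_field K \<longleftrightarrow> subfield_real K \<and>
     (\<exists>b1\<in>K. \<exists>b2\<in>K. \<exists>b3\<in>K. Q_lin_indep3 b1 b2 b3 \<and>
        K = {x * b1 + y * b2 + z * b3 | x y z. x \<in> \<rat> \<and> y \<in> \<rat> \<and> z \<in> \<rat>})"

definition embeddings :: "real set \<Rightarrow> (real \<Rightarrow> complex) set" where
  "embeddings K = {\<sigma>. \<sigma> 1 = 1 \<and>
      (\<forall>x\<in>K. \<forall>y\<in>K. \<sigma> (x + y) = \<sigma> x + \<sigma> y \<and> \<sigma> (x * y) = \<sigma> x * \<sigma> y) \<and>
      (\<forall>x. x \<notin> K \<longrightarrow> \<sigma> x = 0)}"

definition field_norm :: "real set \<Rightarrow> real \<Rightarrow> complex" where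
  "field_norm K a = (\<Prod>\<sigma>\<in>embeddings K. \<sigma> a)"

definition Ind :: "(nat \<times> nat) set" where
  "Ind = {(i, j). i < 3 \<and> j < 3 \<and> i \<noteq> j}"

definition theta :: "nat \<Rightarrow> nat \<Rightarrow> nat" where
  "theta i j = 3 - i - j"

definition Delta_K :: "real set \<Rightarrow> (real \<times> real) set" where
  "Delta_K K = {(a, b). a \<in> K \<and> b \<in> K \<and> Q_lin_indep3 1 a b \<and> a > 0 \<and> b > 0 \<and> a + b < 1}"

definition Delta :: "(real \<times> real) set" where
  "Delta = {(x, y). x \<ge> 0 \<and> y \<ge> 0 \<and> x + y \<le> 1}"

definition tri :: "nat \<times> nat \<Rightarrow> (real \<times> real) set" where
  "tri ij = {(x, y) \<in> Delta.
      (if ij = (1, 2) then x \<ge> y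
       else if ij = (2, 1) then x \<le> y
       else if ij = (0, 1) then 2 * x + y - 1 \<le> 0
       else if ij = (1, 0) then 2 * x + y - 1 \<ge> 0
       else if ij = (0, 2) then x + 2 * y - 1 \<le> 0
       else x + 2 * y - 1 \<ge> 0)}"

definition Tmap :: "nat \<times> nat \<Rightarrow> real \<times> real \<Rightarrow> real \<times> real" where
  "Tmap ij p = (case p of (x, y) \<Rightarrow>
      (if ij = (1, 2) then ((x - y) / (1 - y), y / (1 - y))
       else if ij = (2, 1) then (x / (1 - x), (y - x) / (1 - x))
       else if ij = (0, 1) then (x / (1 - x), y / (1 - x))
       else if ij = (1, 0) then ((2 * x + y - 1) / (x + y), y / (x + y))
       else if ij = (0, 2) then (x / (1 - y), y / (1 - y))
       else (x / (x + y), (x + 2 * y - 1) / (x + y))))"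

text \<open>Coordinates: index 0 is gamma = 1 - alpha - beta, index 1 is alpha, index 2 is beta.\<close>
definition coord :: "real \<Rightarrow> real \<Rightarrow> nat \<Rightarrow> real" where
  "coord a b i = (if i = 0 then 1 - a - b else if i = 1 then a else b)"

definition vval :: "real set \<Rightarrow> real \<Rightarrow> real \<Rightarrow> real \<Rightarrow> nat \<Rightarrow> nat \<Rightarrow> real" where
  "vval K r a b i j =
     (coord a b i powr r * coord a b j powr r) /
     (cmod (field_norm K (coord a b i)) * cmod (field_norm K (coord a b j)))"

text \<open>\<open>eps_is K r a b (i,j)\<close> says \<open>\<epsilon>_K(a,b) = (i,j)\<close>: the maximum of the three values v is
  attained (uniquely) at the pair {i,j}, and (a,b) lies in the triangle for (i,j).\<close>
definition eps_is :: "real set \<Rightarrow> real \<Rightarrow> real \<Rightarrow> real \<Rightarrow> nat \<times> nat \<Rightarrow> bool" where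
  "eps_is K r a b ij \<longleftrightarrow> ij \<in> Ind \<and>
     (\<forall>(k, l)\<in>Ind. {k, l} \<noteq> {fst ij, snd ij} \<longrightarrow> vval K r a b k l < vval K r a b (fst ij) (snd ij)) \<and>
     (a, b) \<in> tri ij"

end

theory Submission
  imports Defs
begin

text \<open>Scale a point of \<open>\<Delta>\<^sub>K\<close> to a vector \<open>X = (\<gamma>, \<alpha>, \<beta>)\<close> of positive elements of \<open>K\<close>. The
  values \<open>v\<close> are products \<open>W(X\<^sub>i) W(X\<^sub>j)\<close> of the multiplicative weight \<open>W(x) = x\<^sup>r / |N(x)|\<close>
  divided by a common factor, so \<open>\<epsilon>\<^sub>K = (i, j)\<close> means that \<open>X\<^sub>\<theta>\<close> has the least weight and
  \<open>X\<^sub>j \<le> X\<^sub>i\<close>; and \<open>T\<^sub>(\<^sub>i\<^sub>,\<^sub>j\<^sub>)\<close> replaces \<open>X\<^sub>i\<close> by \<open>X\<^sub>i - X\<^sub>j\<close>. Taking \<open>X\<^sub>j = 1\<close>,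
  \<open>X\<^sub>i = u + 1\<close>, \<open>X\<^sub>\<theta> = z\<close>, both steps become strict inequalities between \<open>W(u)\<close>,
  \<open>W(u + 1)\<close>, \<open>W(z)\<close>, \<open>1\<close> and between \<open>u\<close>, \<open>z\<close>, \<open>1\<close>. These are met by elements close to a real
  number \<open>v\<close> whose two complex conjugates are both close to a prescribed \<open>w \<noteq> 0\<close>: their weight
  is close to \<open>v\<^sup>r / (v w\<^sup>2)\<close>, which can be made large or small at will. Such elements exist
  because, in the basis \<open>1, e, e\<^sup>2\<close> of \<open>K\<close>, rational coordinates approximate the real ones of
  the number with value \<open>v\<close> and conjugates \<open>w\<close>, and \<open>1, u, z\<close> stay independent after a small
  perturbation.\<close>

lemma subfield_realD:
  assumes "subfield_real K"
  shows subfield_real_zero: "0 \<in> K" and subfield_real_one: "1 \<in> K"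
    and subfield_real_add: "\<And>x y. x \<in> K \<Longrightarrow> y \<in> K \<Longrightarrow> x + y \<in> K"
    and subfield_real_mult: "\<And>x y. x \<in> K \<Longrightarrow> y \<in> K \<Longrightarrow> x * y \<in> K"
    and subfield_real_uminus: "\<And>x. x \<in> K \<Longrightarrow> - x \<in> K"
    and subfield_real_inverse: "\<And>x. x \<in> K \<Longrightarrow> inverse x \<in> K"
  using assms unfolding subfield_real_def by auto

lemma subfield_real_diff: "subfield_real K \<Longrightarrow> x \<in> K \<Longrightarrow> y \<in> K \<Longrightarrow> x - y \<in> K"
  by (metis diff_conv_add_uminus subfield_real_add subfield_real_uminus)

lemma subfield_real_divide: "subfield_real K \<Longrightarrow> x \<in> K \<Longrightarrow> y \<in> K \<Longrightarrow> x / y \<in> K"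
  by (metis divide_inverse subfield_real_inverse subfield_real_mult)

lemma subfield_real_power: "subfield_real K \<Longrightarrow> x \<in> K \<Longrightarrow> x ^ n \<in> K"
  by (induction n) (auto intro: subfield_real_one subfield_real_mult)

lemma subfield_real_of_int: "subfield_real K \<Longrightarrow> real_of_int n \<in> K"
proof (induction n rule: int_induct[where k = 0])
  case (step1 i) then show ?case by (simp add: subfield_real_add subfield_real_one)
next
  case (step2 i) then show ?case by (simp add: subfield_real_diff subfield_real_one)
qed (simp add: subfield_real_zero)

lemma Rats_subset_subfield_real: "subfield_real K \<Longrightarrow> x \<in> \<rat> \<Longrightarrow> x \<in> K"
  by (auto elim!: Rats_cases' intro: subfield_real_divide subfield_real_of_int)

lemma embeddingD:
  assumes "\<sigma> \<in> embeddings K"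
  shows embedding_one: "\<sigma> 1 = 1"
    and embedding_add: "\<And>x y. x \<in> K \<Longrightarrow> y \<in> K \<Longrightarrow> \<sigma> (x + y) = \<sigma> x + \<sigma> y"
    and embedding_mult: "\<And>x y. x \<in> K \<Longrightarrow> y \<in> K \<Longrightarrow> \<sigma> (x * y) = \<sigma> x * \<sigma> y"
    and embedding_outside: "\<And>x. x \<notin> K \<Longrightarrow> \<sigma> x = 0"
  using assms unfolding embeddings_def by auto

lemma embedding_of_int:
  assumes K: "subfield_real K" and \<sigma>: "\<sigma> \<in> embeddings K"
  shows "\<sigma> (real_of_int n) = of_int n"
proof (induction n rule: int_induct[where k = 0])
  case base
  have "\<sigma> (0 + 0) = \<sigma> 0 + \<sigma> 0" using embedding_add[OF \<sigma>] subfield_real_zero[OF K] by blast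
  then show ?case by simp
next
  case (step1 i)
  then show ?case
    using embedding_add[OF \<sigma> subfield_real_of_int[OF K] subfield_real_one[OF K]] embedding_one[OF \<sigma>]
    by simp
next
  case (step2 i)
  have "\<sigma> (real_of_int i) = \<sigma> (real_of_int (i - 1)) + 1"
    using embedding_add[OF \<sigma> subfield_real_of_int[OF K, of "i - 1"] subfield_real_one[OF K]]
      embedding_one[OF \<sigma>] by simp
  with step2 show ?case by (simp add: eq_diff_eq)
qed

lemma embedding_Rats:
  assumes K: "subfield_real K" and \<sigma>: "\<sigma> \<in> embeddings K" and "x \<in> \<rat>"
  shows "\<sigma> x = of_real x"
proof -
  obtain m n where mn: "n > 0" "x = real_of_int m / real_of_int n"
    using \<open>x \<in> \<rat>\<close> by (auto elim: Rats_cases')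
  have "of_int m = \<sigma> (real_of_int n * x)"
    using mn embedding_of_int[OF K \<sigma>] by simp
  also have "\<dots> = of_int n * \<sigma> x"
    using embedding_mult[OF \<sigma> subfield_real_of_int[OF K] Rats_subset_subfield_real[OF K \<open>x \<in> \<rat>\<close>]]
      embedding_of_int[OF K \<sigma>] by simp
  finally have "\<sigma> x = of_int m / of_int n" using mn(1) by (simp add: field_simps)
  then show ?thesis using mn by simp
qed

lemma embedding_nonzero:
  assumes K: "subfield_real K" and \<sigma>: "\<sigma> \<in> embeddings K" and "x \<in> K" "x \<noteq> 0"
  shows "\<sigma> x \<noteq> 0"
proof
  assume "\<sigma> x = 0"
  then have "\<sigma> (x * inverse x) = 0"
    using embedding_mult[OF \<sigma> \<open>x \<in> K\<close> subfield_real_inverse[OF K \<open>x \<in> K\<close>]] by simp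
  with \<open>x \<noteq> 0\<close> embedding_one[OF \<sigma>] show False by simp
qed

lemma field_norm_mult: "x \<in> K \<Longrightarrow> y \<in> K \<Longrightarrow> field_norm K (x * y) = field_norm K x * field_norm K y"
  unfolding field_norm_def prod.distrib[symmetric] by (auto intro: prod.cong embedding_mult)

lemma field_norm_one: "field_norm K 1 = 1"
  unfolding field_norm_def by (auto intro: prod.neutral embedding_one)

lemma field_norm_nonzero: "subfield_real K \<Longrightarrow> x \<in> K \<Longrightarrow> x \<noteq> 0 \<Longrightarrow> field_norm K x \<noteq> 0"
  unfolding field_norm_def by (cases "finite (embeddings K)") (auto dest: embedding_nonzero)

definition weight :: "real set \<Rightarrow> real \<Rightarrow> real \<Rightarrow> real" where
  "weight K r x = x powr r / cmod (field_norm K x)"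

lemma vval_eq_weight: "vval K r a b i j = weight K r (coord a b i) * weight K r (coord a b j)"
  by (simp add: vval_def weight_def)

lemma weight_pos: "subfield_real K \<Longrightarrow> x \<in> K \<Longrightarrow> x > 0 \<Longrightarrow> weight K r x > 0"
  using field_norm_nonzero[of K x] by (simp add: weight_def)

lemma weight_one: "weight K r 1 = 1"
  by (simp add: weight_def field_norm_one)

lemma weight_divide:
  assumes K: "subfield_real K" and "x \<in> K" "x > 0" "s \<in> K" "s > 0"
  shows "weight K r (x / s) = weight K r x / weight K r s"
proof -
  have "field_norm K x = field_norm K (x / s) * field_norm K s"
    using field_norm_mult[OF subfield_real_divide[OF K \<open>x \<in> K\<close> \<open>s \<in> K\<close>] \<open>s \<in> K\<close>] \<open>s > 0\<close> by simp
  then show ?thesis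
    using field_norm_nonzero[OF K \<open>s \<in> K\<close>] assms(3,5)
    by (simp add: weight_def powr_divide norm_divide norm_mult)
qed

section \<open>Linear algebra over the rationals\<close>

interpretation real_over_rat: vector_space "\<lambda>(q::rat) (x::real). real_of_rat q * x"
  by unfold_locales (auto simp: algebra_simps of_rat_add of_rat_mult)

lemma Rats_mult_in_span: "x \<in> \<rat> \<Longrightarrow> v \<in> real_over_rat.span T \<Longrightarrow> x * v \<in> real_over_rat.span T"
  using real_over_rat.span_scale by (auto elim!: Rats_cases)

lemma Rats_combination_in_span:
  "x \<in> \<rat> \<Longrightarrow> y \<in> \<rat> \<Longrightarrow> z \<in> \<rat> \<Longrightarrow> x * b1 + y * b2 + z * b3 \<in> real_over_rat.span {b1, b2, b3}"
  by (intro real_over_rat.span_add Rats_mult_in_span real_over_rat.span_base) auto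

lemma Rats_dependent_if_card_less:
  fixes v :: "nat \<Rightarrow> real"
  assumes "finite T" "card T < n" and span: "\<And>k. k < n \<Longrightarrow> v k \<in> real_over_rat.span T"
  shows "\<exists>c. (\<forall>k<n. c k \<in> \<rat>) \<and> (\<exists>k<n. c k \<noteq> 0) \<and> (\<Sum>k<n. c k * v k) = 0"
proof (rule ccontr)
  assume indep: "\<not> ?thesis"
  have inj: "inj_on v {..<n}"
  proof (rule inj_onI, rule ccontr)
    fix a b assume ab: "a \<in> {..<n}" "b \<in> {..<n}" "v a = v b" "a \<noteq> b"
    define c where "c k = (if k = a then 1 else if k = b then -1 else 0 :: real)" for k
    have "(\<Sum>k<n. c k * v k) = (\<Sum>k\<in>{a, b}. c k * v k)"
      by (rule sum.mono_neutral_right) (use ab in \<open>auto simp: c_def\<close>)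
    with ab have "(\<Sum>k<n. c k * v k) = 0" by (simp add: c_def)
    moreover have "\<forall>k<n. c k \<in> \<rat>" "c a \<noteq> 0" by (auto simp: c_def)
    ultimately show False using indep ab(1) by blast
  qed
  have only_trivial: "\<forall>k<n. c k = 0" if "\<forall>k<n. c k \<in> \<rat>" "(\<Sum>k<n. c k * v k) = 0" for c
    using indep that by blast
  have "real_over_rat.independent (v ` {..<n})"
  proof (rule real_over_rat.independent_if_scalars_zero)
    fix f x assume "(\<Sum>x\<in>v ` {..<n}. real_of_rat (f x) * x) = 0" "x \<in> v ` {..<n}"
    then have "(\<Sum>k<n. real_of_rat (f (v k)) * v k) = 0" by (simp add: sum.reindex[OF inj])
    then have "\<forall>k<n. real_of_rat (f (v k)) = 0" by (intro only_trivial) auto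
    with \<open>x \<in> v ` {..<n}\<close> show "f x = 0" by auto
  qed simp
  then have "card (v ` {..<n}) \<le> card T"
    using real_over_rat.independent_span_bound[OF \<open>finite T\<close>] span by blast
  with inj \<open>card T < n\<close> show False by (simp add: card_image)
qed

lemma three_in_span_of_two_dependent:
  assumes "x1 \<in> real_over_rat.span {a, b}" "x2 \<in> real_over_rat.span {a, b}" "x3 \<in> real_over_rat.span {a, b}"
  obtains c1 c2 c3 where "c1 \<in> \<rat>" "c2 \<in> \<rat>" "c3 \<in> \<rat>" "c1 \<noteq> 0 \<or> c2 \<noteq> 0 \<or> c3 \<noteq> 0"
    "c1 * x1 + c2 * x2 + c3 * x3 = 0"
proof -
  define v where "v k = (if k = 0 then x1 else if k = 1 then x2 else x3)" for k :: nat
  have "card {a, b} < 3" "\<And>k. v k \<in> real_over_rat.span {a, b}"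
    using assms by (auto simp: card_insert_if v_def)
  then obtain c where c: "\<forall>k<3. c k \<in> \<rat>" "\<exists>k<3. c k \<noteq> 0" "(\<Sum>k<3. c k * v k) = 0"
    using Rats_dependent_if_card_less[of "{a, b}" 3 v] by auto
  have "c 0 \<noteq> 0 \<or> c 1 \<noteq> 0 \<or> c 2 \<noteq> 0"
    using c(2) by (auto simp: numeral_eq_Suc less_Suc_eq)
  moreover have "c 0 * x1 + c 1 * x2 + c 2 * x3 = 0"
    using c(3) by (simp add: v_def numeral_eq_Suc lessThan_Suc)
  ultimately show thesis by (rule that[rotated 3]) (use c(1) in auto)
qed

lemma four_in_span_of_three_dependent:
  assumes "\<And>x. x \<in> {x1, x2, x3, x4} \<Longrightarrow> x \<in> real_over_rat.span {a, b, c}"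
  obtains c1 c2 c3 c4 where "c1 \<in> \<rat>" "c2 \<in> \<rat>" "c3 \<in> \<rat>" "c4 \<in> \<rat>"
    "c1 \<noteq> 0 \<or> c2 \<noteq> 0 \<or> c3 \<noteq> 0 \<or> c4 \<noteq> 0" "c1 * x1 + c2 * x2 + c3 * x3 + c4 * x4 = 0"
proof -
  define v where "v k = (if k = 0 then x1 else if k = 1 then x2 else if k = 2 then x3 else x4)" for k :: nat
  have "card {a, b, c} < 4" "\<And>k. v k \<in> real_over_rat.span {a, b, c}"
    using assms by (auto simp: card_insert_if v_def)
  then obtain d where d: "\<forall>k<4. d k \<in> \<rat>" "\<exists>k<4. d k \<noteq> 0" "(\<Sum>k<4. d k * v k) = 0"
    using Rats_dependent_if_card_less[of "{a, b, c}" 4 v] by auto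
  have "d 0 \<noteq> 0 \<or> d 1 \<noteq> 0 \<or> d 2 \<noteq> 0 \<or> d 3 \<noteq> 0"
    using d(2) by (auto simp: numeral_eq_Suc less_Suc_eq)
  moreover have "d 0 * x1 + d 1 * x2 + d 2 * x3 + d 3 * x4 = 0"
    using d(3) by (simp add: v_def numeral_eq_Suc lessThan_Suc)
  ultimately show thesis by (rule that[rotated 4]) (use d(1) in auto)
qed

lemma Q_lin_indep3D:
  "Q_lin_indep3 a b c \<Longrightarrow> x \<in> \<rat> \<Longrightarrow> y \<in> \<rat> \<Longrightarrow> z \<in> \<rat> \<Longrightarrow> x * a + y * b + z * c = 0 \<Longrightarrow> x = 0 \<and> y = 0 \<and> z = 0"
  unfolding Q_lin_indep3_def by blast

lemma real_cubic_field_basisE: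
  assumes "real_cubic_field K"
  obtains b1 b2 b3 where "Q_lin_indep3 b1 b2 b3" "b1 \<in> K" "b2 \<in> K" "b3 \<in> K"
    "K \<subseteq> real_over_rat.span {b1, b2, b3}"
proof -
  obtain b1 b2 b3 where b: "Q_lin_indep3 b1 b2 b3" "b1 \<in> K" "b2 \<in> K" "b3 \<in> K"
    "K = {x * b1 + y * b2 + z * b3 | x y z. x \<in> \<rat> \<and> y \<in> \<rat> \<and> z \<in> \<rat>}"
    using assms unfolding real_cubic_field_def by blast
  then show ?thesis using that Rats_combination_in_span by blast
qed

lemma real_cubic_field_four_dependent:
  assumes "real_cubic_field K" "x1 \<in> K" "x2 \<in> K" "x3 \<in> K" "x4 \<in> K"
  obtains c1 c2 c3 c4 where "c1 \<in> \<rat>" "c2 \<in> \<rat>" "c3 \<in> \<rat>" "c4 \<in> \<rat>"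
    "c1 \<noteq> 0 \<or> c2 \<noteq> 0 \<or> c3 \<noteq> 0 \<or> c4 \<noteq> 0" "c1 * x1 + c2 * x2 + c3 * x3 + c4 * x4 = 0"
proof -
  obtain b1 b2 b3 where span: "K \<subseteq> real_over_rat.span {b1, b2, b3}"
    using assms(1) by (rule real_cubic_field_basisE)
  have "x \<in> real_over_rat.span {b1, b2, b3}" if "x \<in> {x1, x2, x3, x4}" for x
    using that assms(2-5) span by blast
  then show thesis by (rule four_in_span_of_three_dependent[OF _ that])
qed

lemma real_cubic_field_irrational: "real_cubic_field K \<Longrightarrow> \<exists>e\<in>K. e \<notin> \<rat>"
proof (elim real_cubic_field_basisE, rule ccontr)
  fix b1 b2 b3 assume b: "Q_lin_indep3 b1 b2 b3" "b1 \<in> K" "b2 \<in> K" "\<not> (\<exists>e\<in>K. e \<notin> \<rat>)"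
  then have "b1 \<in> \<rat>" "b2 \<in> \<rat>" by auto
  moreover have "b2 * b1 + (- b1) * b2 + 0 * b3 = 0" by simp
  ultimately have "b1 = 0" using Q_lin_indep3D[OF b(1), of b2 "- b1" 0] by simp
  then show False using Q_lin_indep3D[OF b(1), of 1 0 0] by simp
qed

text \<open>Division in the quadratic extension: multiply by the conjugate \<open>s + t p - t e\<close>;
  the product \<open>(s + t e) (s + t p - t e) = s\<^sup>2 + s t p - t\<^sup>2 q\<close> is rational.\<close>
lemma quadratic_irrational_divide:
  assumes e: "e \<notin> \<rat>" "e\<^sup>2 = p * e + q" "p \<in> \<rat>" "q \<in> \<rat>"
    and coeffs: "s \<in> \<rat>" "t \<in> \<rat>" "s' \<in> \<rat>" "t' \<in> \<rat>" and "s + t * e \<noteq> 0"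
  shows "\<exists>\<sigma>\<in>\<rat>. \<exists>\<tau>\<in>\<rat>. (s' + t' * e) / (s + t * e) = \<sigma> + \<tau> * e"
proof -
  define M where "M = s\<^sup>2 + s * t * p - t\<^sup>2 * q"
  have "(s + t * e) * (s + t * p - t * e) - M = t\<^sup>2 * (p * e + q - e\<^sup>2)"
    by (simp add: M_def algebra_simps power2_eq_square)
  then have conj: "(s + t * e) * (s + t * p - t * e) = M" using e(2) by simp
  have "s + t * p - t * e \<noteq> 0"
  proof
    assume h: "s + t * p - t * e = 0"
    then have "t \<noteq> 0" using \<open>s + t * e \<noteq> 0\<close> by auto
    with h have "e = (s + t * p) / t" by (simp add: field_simps)
    moreover have "(s + t * p) / t \<in> \<rat>" using coeffs e(3) by simp
    ultimately show False using e(1) by simp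
  qed
  then have "M \<noteq> 0" using conj \<open>s + t * e \<noteq> 0\<close> by auto
  have "(s' + t' * e) * (s + t * p - t * e) - ((s' * s + s' * t * p - t' * t * q) + (t' * s - s' * t) * e)
      = t' * t * (p * e + q - e\<^sup>2)"
    by (simp add: algebra_simps power2_eq_square)
  then have "(s' + t' * e) * (s + t * p - t * e) = (s' * s + s' * t * p - t' * t * q) + (t' * s - s' * t) * e"
    using e(2) by simp
  then have "(s' + t' * e) / (s + t * e) = ((s' * s + s' * t * p - t' * t * q) + (t' * s - s' * t) * e) / M"
    using nonzero_mult_divide_mult_cancel_right[OF \<open>s + t * p - t * e \<noteq> 0\<close>, of "s' + t' * e" "s + t * e"]
    by (simp only: conj)
  then have "(s' + t' * e) / (s + t * e) = (s' * s + s' * t * p - t' * t * q) / M + (t' * s - s' * t) / M * e"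
    by (simp add: add_divide_distrib)
  moreover have "(s' * s + s' * t * p - t' * t * q) / M \<in> \<rat>" "(t' * s - s' * t) / M \<in> \<rat>"
    using e(3,4) coeffs by (simp_all add: M_def)
  ultimately show ?thesis by blast
qed

lemma tendsto_less_eventually:
  fixes f g :: "'a \<Rightarrow> real"
  assumes "(f \<longlongrightarrow> a) F" "(g \<longlongrightarrow> b) F" "a < b"
  shows "eventually (\<lambda>x. f x < g x) F"
proof -
  have "((\<lambda>x. g x - f x) \<longlongrightarrow> b - a) F" using assms(1,2) by (rule tendsto_diff[rotated])
  then have "eventually (\<lambda>x. 0 < g x - f x) F" using assms(3) by (intro order_tendstoD(1)) auto
  then show ?thesis by eventually_elim simp
qed

lemma Rats_nonzero_tendsto:
  fixes x :: real
  obtains A where "\<And>n. A n \<in> \<rat>" "\<And>n. A n \<noteq> 0" "A \<longlonglongrightarrow> x"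
proof -
  have "\<exists>q. q \<in> \<rat> \<and> q \<noteq> 0 \<and> x - inverse (real (Suc n)) \<le> q \<and> q \<le> x + inverse (real (Suc n))" for n
  proof (cases "x \<ge> 0")
    case True
    obtain q where "q \<in> \<rat>" "x < q" "q < x + inverse (real (Suc n))"
      using Rats_dense_in_real[of x "x + inverse (real (Suc n))"] by auto
    with True show ?thesis by (intro exI[of _ q]) simp
  next
    case False
    obtain q where "q \<in> \<rat>" "x - inverse (real (Suc n)) < q" "q < x"
      using Rats_dense_in_real[of "x - inverse (real (Suc n))" x] by auto
    with False show ?thesis by (intro exI[of _ q]) simp
  qed
  then have "\<exists>A. \<forall>n. A n \<in> \<rat> \<and> A n \<noteq> 0 \<and>
      x - inverse (real (Suc n)) \<le> A n \<and> A n \<le> x + inverse (real (Suc n))"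
    by (intro choice allI)
  then obtain A where A: "\<forall>n. A n \<in> \<rat> \<and> A n \<noteq> 0 \<and>
      x - inverse (real (Suc n)) \<le> A n \<and> A n \<le> x + inverse (real (Suc n))" ..
  have lower: "(\<lambda>n. x - inverse (real (Suc n))) \<longlonglongrightarrow> x"
    using tendsto_diff[OF tendsto_const LIMSEQ_inverse_real_of_nat, of x] by simp
  have upper: "(\<lambda>n. x + inverse (real (Suc n))) \<longlonglongrightarrow> x"
    using tendsto_add[OF tendsto_const LIMSEQ_inverse_real_of_nat, of x] by simp
  have "eventually (\<lambda>n. x - inverse (real (Suc n)) \<le> A n) sequentially"
    "eventually (\<lambda>n. A n \<le> x + inverse (real (Suc n))) sequentially"
    using A by (simp_all add: always_eventually)
  then have "A \<longlonglongrightarrow> x" using lower upper by (rule tendsto_sandwich)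
  with A that show ?thesis by blast
qed

lemma Rats_tendsto_perturb:
  fixes C \<beta> \<gamma> :: "nat \<Rightarrow> real"
  assumes "\<And>n. C n \<in> \<rat>" "C \<longlonglongrightarrow> c" "\<And>n. \<beta> n \<noteq> 0"
  shows "\<exists>C'. (\<forall>n. C' n \<in> \<rat> \<and> \<beta> n * C' n \<noteq> \<gamma> n) \<and> C' \<longlonglongrightarrow> c"
proof -
  define C' where "C' n = (if \<beta> n * C n = \<gamma> n then C n + inverse (real (Suc n)) else C n)" for n
  have "C' n \<in> \<rat> \<and> \<beta> n * C' n \<noteq> \<gamma> n" for n
    using assms(1)[of n] assms(3)[of n] by (simp add: C'_def algebra_simps)
  moreover have bounds: "eventually (\<lambda>n. C n \<le> C' n) sequentially"
    "eventually (\<lambda>n. C' n \<le> C n + inverse (real (Suc n))) sequentially"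
    by (simp_all add: C'_def always_eventually)
  have "(\<lambda>n. C n + inverse (real (Suc n))) \<longlonglongrightarrow> c"
    using tendsto_add[OF assms(2) LIMSEQ_inverse_real_of_nat] by simp
  with bounds assms(2) have "C' \<longlonglongrightarrow> c" by (rule tendsto_sandwich)
  ultimately show ?thesis by blast
qed

lemma tendsto_eventually_same_side:
  fixes f :: "nat \<Rightarrow> real"
  assumes "f \<longlonglongrightarrow> v"
  shows "eventually (\<lambda>n. (c < v \<longrightarrow> c < f n) \<and> (v < c \<longrightarrow> f n < c)) sequentially"
proof -
  have "eventually (\<lambda>n. c < v \<longrightarrow> c < f n) sequentially"
    by (cases "c < v") (simp_all add: order_tendstoD(1)[OF assms])
  moreover have "eventually (\<lambda>n. v < c \<longrightarrow> f n < c) sequentially"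
    by (cases "v < c") (simp_all add: order_tendstoD(2)[OF assms])
  ultimately show ?thesis by (rule eventually_conj)
qed

lemma Ind_cases:
  assumes "(i, j) \<in> Ind"
  shows "(i, j) = (0, 1) \<or> (i, j) = (1, 0) \<or> (i, j) = (0, 2) \<or> (i, j) = (2, 0) \<or> (i, j) = (1, 2) \<or> (i, j) = (2, 1)"
  using assms unfolding Ind_def by auto

lemma theta_facts:
  assumes "(i, j) \<in> Ind"
  shows "theta i j < 3" "theta i j \<noteq> i" "theta i j \<noteq> j" "i < 3" "j < 3" "i \<noteq> j"
    "\<And>m. m < 3 \<Longrightarrow> m = i \<or> m = j \<or> m = theta i j"
  using Ind_cases[OF assms] by (auto simp: theta_def)

lemma Ind_sum_eq:
  fixes X :: "nat \<Rightarrow> real"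
  assumes "(i, j) \<in> Ind"
  shows "X 0 + X 1 + X 2 = X i + X j + X (theta i j)"
  using Ind_cases[OF assms] by (auto simp: theta_def)

lemma Ind_cases_after_step:
  assumes "(i, j) \<in> Ind" "(k, l) \<in> Ind" "(k, l) \<noteq> (i, theta i j)" "(k, l) \<noteq> (theta i j, i)"
  shows "(k, l) = (i, j) \<or> (k, l) = (j, i) \<or> (k, l) = (j, theta i j) \<or> (k, l) = (theta i j, j)"
  using Ind_cases[OF assms(1)] Ind_cases[OF assms(2)] assms(3,4) by (auto simp: theta_def)

lemma theta_eqs:
  assumes "(i, j) \<in> Ind"
  shows "theta j i = theta i j" "theta j (theta i j) = i" "theta (theta i j) j = i"
  using Ind_cases[OF assms] by (auto simp: theta_def)

lemma products_less_if_third_least: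
  fixes w :: "nat \<Rightarrow> real"
  assumes ij: "(i, j) \<in> Ind" and pos: "\<And>m. m < 3 \<Longrightarrow> w m > 0"
    and less: "w (theta i j) < w i" "w (theta i j) < w j"
    and kl: "(k, l) \<in> Ind" "{k, l} \<noteq> {i, j}"
  shows "w k * w l < w i * w j"
proof -
  have "(k = theta i j \<and> (l = i \<or> l = j)) \<or> (l = theta i j \<and> (k = i \<or> k = j))"
    using Ind_cases[OF ij] Ind_cases[OF kl(1)] kl(2) by (auto simp: theta_def doubleton_eq_iff)
  moreover have "w (theta i j) * w i < w i * w j" "w (theta i j) * w j < w i * w j"
    using less pos theta_facts[OF ij] by (simp_all add: mult.commute)
  ultimately show ?thesis by (auto simp: mult.commute)
qed

lemma Q_lin_indep3_swap12: "Q_lin_indep3 a b c \<Longrightarrow> Q_lin_indep3 b a c"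
  unfolding Q_lin_indep3_def by (metis add.commute)

lemma Q_lin_indep3_swap23: "Q_lin_indep3 a b c \<Longrightarrow> Q_lin_indep3 a c b"
  unfolding Q_lin_indep3_def by (metis add.assoc add.commute)

lemma Q_lin_indep3_Ind:
  assumes "(i, j) \<in> Ind" "Q_lin_indep3 (X i) (X j) (X (theta i j))"
  shows "Q_lin_indep3 (X 0) (X 1) (X 2)"
  using Ind_cases[OF assms(1)] assms(2)
  by (auto simp: theta_def) (meson Q_lin_indep3_swap12 Q_lin_indep3_swap23)+

lemma Q_lin_indep3_add_one:
  assumes "Q_lin_indep3 1 u z"
  shows "Q_lin_indep3 (u + 1) 1 z"
  unfolding Q_lin_indep3_def
proof (intro ballI impI)
  fix x y w assume "x \<in> \<rat>" "y \<in> \<rat>" "w \<in> \<rat>" "x * (u + 1) + y * 1 + w * z = 0"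
  then have "(x + y) * 1 + x * u + w * z = 0" "x + y \<in> \<rat>" by (simp_all add: algebra_simps)
  then show "x = 0 \<and> y = 0 \<and> w = 0"
    using Q_lin_indep3D[OF assms, of "x + y" x w] \<open>x \<in> \<rat>\<close> \<open>w \<in> \<rat>\<close> by simp
qed

lemma Q_lin_indep3_normalize:
  assumes "Q_lin_indep3 a b c" "a + b + c \<noteq> 0"
  shows "Q_lin_indep3 1 (b / (a + b + c)) (c / (a + b + c))"
  unfolding Q_lin_indep3_def
proof (intro ballI impI)
  fix x y w assume xyw: "x \<in> \<rat>" "y \<in> \<rat>" "w \<in> \<rat>" "x * 1 + y * (b / (a + b + c)) + w * (c / (a + b + c)) = 0"
  define S where "S = a + b + c"
  have "x * S + y * b + w * c = 0"
    using xyw(4) assms(2) unfolding S_def[symmetric] by (simp add: field_simps)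
  then have "x * a + (x + y) * b + (x + w) * c = 0" by (simp add: S_def algebra_simps)
  then have "x = 0 \<and> x + y = 0 \<and> x + w = 0"
    using Q_lin_indep3D[OF assms(1), of x "x + y" "x + w"] xyw(1-3) by simp
  then show "x = 0 \<and> y = 0 \<and> w = 0" by simp
qed

lemma coord_normalized:
  fixes X :: "nat \<Rightarrow> real"
  assumes "s = X 0 + X 1 + X 2" "s \<noteq> 0" "m < 3"
  shows "coord (X 1 / s) (X 2 / s) m = X m / s"
proof -
  have "1 - X 1 / s - X 2 / s = (s - X 1 - X 2) / s" using assms(2) by (simp add: diff_divide_distrib)
  also have "s - X 1 - X 2 = X 0" using assms(1) by simp
  finally have "1 - X 1 / s - X 2 / s = X 0 / s" .
  then show ?thesis using assms(3) by (auto simp: coord_def less_Suc_eq numeral_eq_Suc)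
qed

lemma normalized_in_Delta_K:
  fixes X :: "nat \<Rightarrow> real"
  assumes K: "subfield_real K" and X: "\<And>m. m < 3 \<Longrightarrow> X m \<in> K" "\<And>m. m < 3 \<Longrightarrow> X m > 0"
    and indep: "Q_lin_indep3 (X 0) (X 1) (X 2)"
  shows "(X 1 / (X 0 + X 1 + X 2), X 2 / (X 0 + X 1 + X 2)) \<in> Delta_K K"
proof -
  define s where "s = X 0 + X 1 + X 2"
  have "s > 0" "s \<in> K" using X by (simp_all add: s_def add_pos_pos subfield_real_add K)
  then have "X 1 / s \<in> K" "X 2 / s \<in> K" "X 1 / s > 0" "X 2 / s > 0"
    using X[of 1] X[of 2] by (simp_all add: subfield_real_divide K)
  moreover have "X 1 / s + X 2 / s < 1"
    using X(2)[of 0] \<open>s > 0\<close> by (simp add: s_def add_divide_distrib[symmetric])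
  moreover have "Q_lin_indep3 1 (X 1 / s) (X 2 / s)"
    using Q_lin_indep3_normalize[OF indep] \<open>s > 0\<close> by (simp add: s_def)
  ultimately show ?thesis by (simp add: Delta_K_def s_def)
qed

lemma Tmap_coord:
  assumes "(i, j) \<in> Ind" "Tmap (i, j) (a, b) = (a', b')" "1 - coord a b j \<noteq> 0" "m < 3"
  shows "coord a' b' m = (if m = i then coord a b i - coord a b j else coord a b m) / (1 - coord a b j)"
proof -
  have "m = 0 \<or> m = 1 \<or> m = 2" using assms(4) by auto
  then show ?thesis
    using Ind_cases[OF assms(1)] assms(2,3) by (elim disjE) (auto simp: Tmap_def coord_def field_simps)
qed

lemma eps_is_if_weights:
  fixes X :: "nat \<Rightarrow> real"
  assumes K: "subfield_real K" and ij: "(i, j) \<in> Ind"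
    and coords: "\<And>m. m < 3 \<Longrightarrow> coord a b m = X m / s"
    and X: "\<And>m. m < 3 \<Longrightarrow> X m \<in> K" "\<And>m. m < 3 \<Longrightarrow> X m > 0" and s: "s \<in> K" "s > 0"
    and less: "weight K r (X (theta i j)) < weight K r (X i)" "weight K r (X (theta i j)) < weight K r (X j)"
    and "X j \<le> X i"
  shows "eps_is K r a b (i, j)"
proof -
  note ij_facts = theta_facts[OF ij]
  define w where "w m = weight K r (coord a b m)" for m
  have w: "w m = weight K r (X m) / weight K r s" if "m < 3" for m
    unfolding w_def using coords[OF that] X[OF that] s by (simp add: weight_divide[OF K])
  have "weight K r s > 0" using weight_pos[OF K s] .
  then have w_pos: "w m > 0" if "m < 3" for m using w[OF that] weight_pos[OF K X[OF that]] by simp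
  have w_less: "w (theta i j) < w i" "w (theta i j) < w j"
    using less \<open>weight K r s > 0\<close> w ij_facts by (simp_all add: divide_strict_right_mono)
  have "vval K r a b k l < vval K r a b i j" if "(k, l) \<in> Ind" "{k, l} \<noteq> {i, j}" for k l
    using products_less_if_third_least[OF ij w_pos w_less that] by (simp add: vval_eq_weight w_def)
  then have vval_less: "\<forall>(k, l)\<in>Ind. {k, l} \<noteq> {i, j} \<longrightarrow> vval K r a b k l < vval K r a b i j"
    by blast
  have nonneg: "coord a b m \<ge> 0" if "m < 3" for m
    using coords[OF that] X(2)[OF that] s(2) by simp
  have "(a, b) \<in> Delta" using nonneg[of 0] nonneg[of 1] nonneg[of 2] by (simp add: Delta_def coord_def)
  moreover have "coord a b j \<le> coord a b i"
    using coords ij_facts \<open>X j \<le> X i\<close> s(2) by (simp add: divide_right_mono)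
  ultimately have "(a, b) \<in> tri (i, j)"
    using Ind_cases[OF ij] by (elim disjE) (simp_all add: tri_def coord_def)
  with ij vval_less show ?thesis
    unfolding eps_is_def by simp
qed

text \<open>The point is the normalisation of \<open>Y + e\<^sub>i\<close>, where \<open>e\<^sub>i\<close> is the \<open>i\<close>-th unit vector and
  \<open>Y j = 1\<close>: the map \<open>Tmap (i, j)\<close> subtracts the \<open>j\<close>-th coordinate from the \<open>i\<close>-th one and
  renormalises, so it sends the point to the normalisation of \<open>Y\<close>.\<close>
lemma eps_step_exists:
  fixes Y :: "nat \<Rightarrow> real"
  assumes K: "subfield_real K" and ij: "(i, j) \<in> Ind" and kl: "(k, l) \<in> Ind"
    and Y: "\<And>m. m < 3 \<Longrightarrow> Y m \<in> K" "\<And>m. m < 3 \<Longrightarrow> Y m > 0" and Yj: "Y j = 1"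
    and indep: "Q_lin_indep3 1 (Y i) (Y (theta i j))"
    and first: "weight K r (Y (theta i j)) < weight K r (Y i + 1)" "weight K r (Y (theta i j)) < 1"
    and second: "weight K r (Y (theta k l)) < weight K r (Y k)"
      "weight K r (Y (theta k l)) < weight K r (Y l)" "Y l \<le> Y k"
  shows "\<exists>(a, b)\<in>Delta_K K. eps_is K r a b (i, j) \<and>
           (case Tmap (i, j) (a, b) of (a', b') \<Rightarrow> eps_is K r a' b' (k, l))"
proof -
  note ij_facts = theta_facts[OF ij]
  define X where "X m = (if m = i then Y m + 1 else Y m)" for m
  define s where "s = X 0 + X 1 + X 2"
  define a b where "a = X 1 / s" and "b = X 2 / s"
  have X: "X m \<in> K" "X m > 0" if "m < 3" for m
    using Y[OF that] by (auto simp: X_def subfield_real_add subfield_real_one K)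
  have Xi: "X i = Y i + 1" and Xj: "X j = 1" and Xt: "X (theta i j) = Y (theta i j)"
    using ij_facts Yj by (simp_all add: X_def)
  have s_eq: "s = Y i + Y (theta i j) + 2"
    using Ind_sum_eq[OF ij, of X] Xi Xj Xt by (simp add: s_def)
  then have "s > 1" using Y(2)[of i] Y(2)[of "theta i j"] ij_facts(1,4) by linarith
  have "s \<in> K" unfolding s_def using X(1) by (simp add: subfield_real_add K)
  have coords: "coord a b m = X m / s" if "m < 3" for m
    using coord_normalized[OF s_def _ that] \<open>s > 1\<close> by (simp add: a_def b_def)
  have "Q_lin_indep3 (X 0) (X 1) (X 2)"
    using Q_lin_indep3_Ind[OF ij] Q_lin_indep3_add_one[OF indep] Xi Xj Xt by simp
  then have "(a, b) \<in> Delta_K K"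
    using normalized_in_Delta_K[OF K X] by (simp add: a_def b_def s_def)
  moreover have "eps_is K r a b (i, j)"
    using eps_is_if_weights[OF K ij coords X \<open>s \<in> K\<close>] first Xi Xj Xt \<open>s > 1\<close>
    by (simp add: weight_one Y(2) ij_facts less_imp_le)
  moreover obtain a' b' where T: "Tmap (i, j) (a, b) = (a', b')" by fastforce
  have "coord a' b' m = Y m / (s - 1)" if "m < 3" for m
  proof -
    have "1 - coord a b j = (s - 1) / s" using coords ij_facts Xj \<open>s > 1\<close> by (simp add: field_simps)
    moreover from this have "1 - coord a b j \<noteq> 0" using \<open>s > 1\<close> by simp
    ultimately show ?thesis
      using Tmap_coord[OF ij T _ that] coords[OF that] coords ij_facts Xi Xj \<open>s > 1\<close>
      by (auto simp: X_def field_simps)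
  qed
  then have "eps_is K r a' b' (k, l)"
    using eps_is_if_weights[OF K kl _ Y, where a = a' and b = b' and s = "s - 1"] second \<open>s > 1\<close> \<open>s \<in> K\<close>
    by (simp add: subfield_real_diff subfield_real_one K)
  ultimately show ?thesis using T by auto
qed

section \<open>A primitive element of a real cubic field\<close>

lemma irrational_lincomb_eq_zero:
  assumes "e \<notin> \<rat>" "s \<in> \<rat>" "t \<in> \<rat>" "s + t * e = 0"
  shows "s = 0 \<and> t = 0"
proof (cases "t = 0")
  case False
  have "t * e = - s" using assms(4) by (simp add: add.commute add_eq_0_iff)
  with False have "e = - s / t" by (simp add: field_simps mult.commute)
  with assms(1-3) show ?thesis by simp
qed (use assms(4) in simp)

lemma quadratic_relation_if_dependent:
  assumes "e \<notin> \<rat>" "\<not> Q_lin_indep3 1 e (e\<^sup>2)"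
  obtains p q where "p \<in> \<rat>" "q \<in> \<rat>" "e\<^sup>2 = p * e + q"
proof -
  obtain x y w where xyw: "x \<in> \<rat>" "y \<in> \<rat>" "w \<in> \<rat>" "x + y * e + w * e\<^sup>2 = 0"
    "\<not> (x = 0 \<and> y = 0 \<and> w = 0)"
    using assms(2) unfolding Q_lin_indep3_def by auto
  have "w \<noteq> 0" using irrational_lincomb_eq_zero[OF assms(1) xyw(1,2)] xyw(4,5) by auto
  then have "e\<^sup>2 = (- y / w) * e + (- x / w)" using xyw(4) by (simp add: field_simps)
  then show thesis by (rule that[rotated 2]) (use xyw(1-3) in simp_all)
qed

lemma real_cubic_field_not_in_span_two:
  assumes K: "real_cubic_field K"
  obtains f where "f \<in> K" "f \<notin> real_over_rat.span {a, b}"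
proof -
  obtain b1 b2 b3 where b: "Q_lin_indep3 b1 b2 b3" "b1 \<in> K" "b2 \<in> K" "b3 \<in> K"
    using K by (rule real_cubic_field_basisE)
  have "\<not> K \<subseteq> real_over_rat.span {a, b}"
  proof
    assume span: "K \<subseteq> real_over_rat.span {a, b}"
    have "b1 \<in> real_over_rat.span {a, b}" "b2 \<in> real_over_rat.span {a, b}" "b3 \<in> real_over_rat.span {a, b}"
      using b(2-4) span by auto
    then obtain c1 c2 c3 where "c1 \<in> \<rat>" "c2 \<in> \<rat>" "c3 \<in> \<rat>" "c1 \<noteq> 0 \<or> c2 \<noteq> 0 \<or> c3 \<noteq> 0"
      "c1 * b1 + c2 * b2 + c3 * b3 = 0"
      by (rule three_in_span_of_two_dependent)
    then show False using Q_lin_indep3D[OF b(1)] by blast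
  qed
  with that show thesis by blast
qed

lemma real_cubic_field_not_quadratic:
  assumes K: "real_cubic_field K" and e: "e \<in> K" "e \<notin> \<rat>" "e\<^sup>2 = p * e + q" "p \<in> \<rat>" "q \<in> \<rat>"
  shows False
proof -
  obtain f where "f \<in> K" "f \<notin> real_over_rat.span {1, e}"
    using K by (rule real_cubic_field_not_in_span_two)
  moreover have "s * 1 + t * e \<in> real_over_rat.span {1, e}" if "s \<in> \<rat>" "t \<in> \<rat>" for s t
    using that by (intro real_over_rat.span_add Rats_mult_in_span real_over_rat.span_base) auto
  ultimately have f: "f \<in> K" "\<And>s t. s \<in> \<rat> \<Longrightarrow> t \<in> \<rat> \<Longrightarrow> f \<noteq> s + t * e" by force+
  have sub: "subfield_real K" using K by (simp add: real_cubic_field_def)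
  obtain c1 c2 c3 c4 where c: "c1 \<in> \<rat>" "c2 \<in> \<rat>" "c3 \<in> \<rat>" "c4 \<in> \<rat>"
    "c1 \<noteq> 0 \<or> c2 \<noteq> 0 \<or> c3 \<noteq> 0 \<or> c4 \<noteq> 0" "c1 * 1 + c2 * e + c3 * f + c4 * (e * f) = 0"
    using K subfield_real_one[OF sub] e(1) f(1) subfield_real_mult[OF sub e(1) f(1)]
    by (rule real_cubic_field_four_dependent)
  show False
  proof (cases "c3 + c4 * e = 0")
    case True
    then have "c3 = 0" "c4 = 0" using irrational_lincomb_eq_zero[OF e(2) c(3,4)] by auto
    then have "c1 = 0" "c2 = 0" using irrational_lincomb_eq_zero[OF e(2) c(1,2)] c(6) by auto
    with \<open>c3 = 0\<close> \<open>c4 = 0\<close> c(5) show False by simp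
  next
    case False
    have "f = (- c1 + (- c2) * e) / (c3 + c4 * e)"
      using False c(6) by (simp add: field_simps)
    then show False
      using quadratic_irrational_divide[OF e(2-5) c(3,4) _ _ False, of "- c1" "- c2"] c(1,2) f(2)
      by auto
  qed
qed

lemma real_cubic_field_powers_independent:
  assumes "real_cubic_field K" "e \<in> K" "e \<notin> \<rat>"
  shows "Q_lin_indep3 1 e (e\<^sup>2)"
proof (rule ccontr)
  assume "\<not> ?thesis"
  with assms(3) obtain p q where "p \<in> \<rat>" "q \<in> \<rat>" "e\<^sup>2 = p * e + q"
    by (rule quadratic_relation_if_dependent)
  with assms show False using real_cubic_field_not_quadratic by blast
qed

lemma real_cubic_field_powers_span:
  assumes K: "real_cubic_field K" and e: "e \<in> K" "Q_lin_indep3 1 e (e\<^sup>2)" and "x \<in> K"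
  obtains a b c where "a \<in> \<rat>" "b \<in> \<rat>" "c \<in> \<rat>" "x = a + b * e + c * e\<^sup>2"
proof -
  have sub: "subfield_real K" using K by (simp add: real_cubic_field_def)
  obtain c1 c2 c3 c4 where c: "c1 \<in> \<rat>" "c2 \<in> \<rat>" "c3 \<in> \<rat>" "c4 \<in> \<rat>"
    "c1 \<noteq> 0 \<or> c2 \<noteq> 0 \<or> c3 \<noteq> 0 \<or> c4 \<noteq> 0" "c1 * 1 + c2 * e + c3 * e\<^sup>2 + c4 * x = 0"
    using K subfield_real_one[OF sub] e(1) subfield_real_power[OF sub e(1)] \<open>x \<in> K\<close>
    by (rule real_cubic_field_four_dependent)
  have "c4 \<noteq> 0" using Q_lin_indep3D[OF e(2) c(1-3)] c(5,6) by auto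
  moreover have "c4 * x = - c1 - c2 * e - c3 * e\<^sup>2" using c(6) by linarith
  ultimately have "x = (- c1 - c2 * e - c3 * e\<^sup>2) / c4" by (simp add: field_simps mult.commute)
  then have "x = (- c1 / c4) + (- c2 / c4) * e + (- c3 / c4) * e\<^sup>2"
    by (simp add: add_divide_distrib diff_divide_distrib)
  then show thesis by (rule that[rotated 3]) (use c(1-4) in simp_all)
qed

locale cubic_generator =
  fixes K :: "real set" and e a0 b0 c0 :: real
  assumes K: "real_cubic_field K" and e_in: "e \<in> K" and powers_indep: "Q_lin_indep3 1 e (e\<^sup>2)"
    and min_poly_Rats: "a0 \<in> \<rat>" "b0 \<in> \<rat>" "c0 \<in> \<rat>"
    and min_poly: "e ^ 3 = a0 + b0 * e + c0 * e\<^sup>2"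

lemma real_cubic_field_generator:
  assumes K: "real_cubic_field K"
  obtains e a0 b0 c0 where "cubic_generator K e a0 b0 c0"
proof -
  obtain e where e: "e \<in> K" "e \<notin> \<rat>" using real_cubic_field_irrational[OF K] by blast
  have sub: "subfield_real K" using K by (simp add: real_cubic_field_def)
  have indep: "Q_lin_indep3 1 e (e\<^sup>2)" using real_cubic_field_powers_independent[OF K e] .
  obtain a b c where "a \<in> \<rat>" "b \<in> \<rat>" "c \<in> \<rat>" "e ^ 3 = a + b * e + c * e\<^sup>2"
    using real_cubic_field_powers_span[OF K e(1) indep subfield_real_power[OF sub e(1)]] .
  with K e(1) indep show thesis by (intro that) (simp add: cubic_generator_def)
qed

section \<open>The embeddings of a real cubic field\<close>

lemma cubic_reduce_mult:
  fixes t :: "'a::real_field"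
  assumes "t ^ 3 = of_real a0 + of_real b0 * t + of_real c0 * t\<^sup>2"
  shows "(of_real a + of_real b * t + of_real c * t\<^sup>2) * (of_real a' + of_real b' * t + of_real c' * t\<^sup>2)
    = of_real (a * a' + (b * c' + c * b') * a0 + c * c' * c0 * a0)
    + of_real (a * b' + b * a' + (b * c' + c * b') * b0 + c * c' * (a0 + c0 * b0)) * t
    + of_real (a * c' + b * b' + c * a' + (b * c' + c * b') * c0 + c * c' * (b0 + c0\<^sup>2)) * t\<^sup>2"
    (is "?lhs = ?rhs")
proof -
  have "?lhs - ?rhs = (of_real (b * c' + c * b') + of_real (c * c') * t + of_real (c * c' * c0))
        * (t ^ 3 - (of_real a0 + of_real b0 * t + of_real c0 * t\<^sup>2))"
    by (simp add: algebra_simps power2_eq_square power3_eq_cube of_real_mult of_real_add)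
  with assms show ?thesis by simp
qed

context cubic_generator
begin

lemma subfield: "subfield_real K"
  using K by (simp add: real_cubic_field_def)

definition elem :: "real \<Rightarrow> real \<Rightarrow> real \<Rightarrow> real" where
  "elem a b c = a + b * e + c * e\<^sup>2"

definition conjugate :: "complex \<Rightarrow> real \<Rightarrow> real \<Rightarrow> real \<Rightarrow> complex" where
  "conjugate t a b c = of_real a + of_real b * t + of_real c * t\<^sup>2"

lemma elem_in: "a \<in> \<rat> \<Longrightarrow> b \<in> \<rat> \<Longrightarrow> c \<in> \<rat> \<Longrightarrow> elem a b c \<in> K"
  unfolding elem_def using e_in Rats_subset_subfield_real[OF subfield]
  by (simp add: subfield_real_add subfield_real_mult subfield_real_power subfield)

lemma elem_cases:
  assumes "x \<in> K"
  obtains a b c where "a \<in> \<rat>" "b \<in> \<rat>" "c \<in> \<rat>" "x = elem a b c"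
  using real_cubic_field_powers_span[OF K e_in powers_indep assms] unfolding elem_def .

lemma elem_eq_iff:
  assumes "a \<in> \<rat>" "b \<in> \<rat>" "c \<in> \<rat>" "a' \<in> \<rat>" "b' \<in> \<rat>" "c' \<in> \<rat>"
  shows "elem a b c = elem a' b' c' \<longleftrightarrow> a = a' \<and> b = b' \<and> c = c'"
proof
  assume "elem a b c = elem a' b' c'"
  then have "(a - a') * 1 + (b - b') * e + (c - c') * e\<^sup>2 = 0"
    by (simp add: elem_def algebra_simps)
  then show "a = a' \<and> b = b' \<and> c = c'"
    using Q_lin_indep3D[OF powers_indep, of "a - a'" "b - b'" "c - c'"] assms by simp
qed simp

lemma elem_nonzero: "a \<in> \<rat> \<Longrightarrow> b \<in> \<rat> \<Longrightarrow> c \<in> \<rat> \<Longrightarrow> c \<noteq> 0 \<Longrightarrow> elem a b c \<noteq> 0"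
  using elem_eq_iff[of a b c 0 0 0] by (simp add: elem_def)

lemma elem_add: "elem a b c + elem a' b' c' = elem (a + a') (b + b') (c + c')"
  by (simp add: elem_def algebra_simps)

lemma elem_mult:
  "elem a b c * elem a' b' c' = elem (a * a' + (b * c' + c * b') * a0 + c * c' * c0 * a0)
     (a * b' + b * a' + (b * c' + c * b') * b0 + c * c' * (a0 + c0 * b0))
     (a * c' + b * b' + c * a' + (b * c' + c * b') * c0 + c * c' * (b0 + c0\<^sup>2))"
  using cubic_reduce_mult[of e a0 b0 c0] min_poly by (simp add: elem_def)

lemma conjugate_add: "conjugate t a b c + conjugate t a' b' c' = conjugate t (a + a') (b + b') (c + c')"
  by (simp add: conjugate_def algebra_simps)

text \<open>Dividing the minimal polynomial by \<open>t - e\<close> leaves \<open>t\<^sup>2 + pp t + qq\<close>, with roots \<open>z1\<close>, \<open>z2\<close>.\<close>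
definition pp :: real where "pp = e - c0"
definition qq :: real where "qq = e\<^sup>2 - c0 * e - b0"
definition z1 :: complex where "z1 = (- of_real pp + csqrt (of_real (pp\<^sup>2 - 4 * qq))) / 2"
definition z2 :: complex where "z2 = (- of_real pp - csqrt (of_real (pp\<^sup>2 - 4 * qq))) / 2"
definition roots :: "complex set" where "roots = {of_real e, z1, z2}"

lemma quadratic_factor: "t\<^sup>2 + of_real pp * t + of_real qq = (t - z1) * (t - z2)"
proof -
  let ?d = "csqrt (of_real (pp\<^sup>2 - 4 * qq))"
  have "z1 + z2 = - of_real pp" by (simp add: z1_def z2_def field_simps)
  moreover have "z1 * z2 = ((of_real pp)\<^sup>2 - ?d\<^sup>2) / 4"
    by (simp add: z1_def z2_def field_simps power2_eq_square)
  then have "z1 * z2 = of_real qq" by simp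
  moreover have "(t - z1) * (t - z2) = t\<^sup>2 - (z1 + z2) * t + z1 * z2"
    by (simp add: algebra_simps power2_eq_square)
  ultimately show ?thesis by simp
qed

lemma min_poly_factor:
  "t ^ 3 - of_real c0 * t\<^sup>2 - of_real b0 * t - of_real a0 = (t - of_real e) * (t - z1) * (t - z2)"
proof -
  have "(t - of_real e) * (t\<^sup>2 + of_real pp * t + of_real qq) - (t ^ 3 - of_real c0 * t\<^sup>2 - of_real b0 * t - of_real a0)
      = of_real (a0 + b0 * e + c0 * e\<^sup>2 - e ^ 3)"
    by (simp add: pp_def qq_def algebra_simps power2_eq_square power3_eq_cube)
  then show ?thesis using min_poly quadratic_factor[of t] by (simp add: mult.assoc)
qed

lemma roots_iff: "t \<in> roots \<longleftrightarrow> t ^ 3 = of_real a0 + of_real b0 * t + of_real c0 * t\<^sup>2"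
proof -
  have "t ^ 3 = of_real a0 + of_real b0 * t + of_real c0 * t\<^sup>2 \<longleftrightarrow>
        t ^ 3 - of_real c0 * t\<^sup>2 - of_real b0 * t - of_real a0 = 0"
    by (auto simp: algebra_simps)
  then show ?thesis unfolding min_poly_factor by (auto simp: roots_def)
qed

lemma elem_qq_pp_nonzero: "elem qq pp 1 \<noteq> 0"
proof -
  have "elem qq pp 1 = elem (- b0) (- 2 * c0) 3"
    by (simp add: elem_def pp_def qq_def power2_eq_square algebra_simps)
  then show ?thesis using elem_nonzero min_poly_Rats by simp
qed

lemma roots_distinct: "z1 \<noteq> z2" "z1 \<noteq> of_real e" "z2 \<noteq> of_real e"
proof -
  have "pp\<^sup>2 - 4 * qq = elem (c0\<^sup>2 + 4 * b0) (2 * c0) (- 3)"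
    by (simp add: elem_def pp_def qq_def power2_eq_square algebra_simps)
  then have "pp\<^sup>2 - 4 * qq \<noteq> 0" using elem_nonzero min_poly_Rats by simp
  then have "csqrt (of_real (pp\<^sup>2 - 4 * qq)) \<noteq> 0" by (simp del: of_real_diff)
  then show "z1 \<noteq> z2" by (simp add: z1_def z2_def)
  have "(of_real e - z1) * (of_real e - z2) = of_real (e\<^sup>2 + pp * e + qq)"
    using quadratic_factor[of "of_real e"] by simp
  moreover have "e\<^sup>2 + pp * e + qq \<noteq> 0"
    using elem_qq_pp_nonzero by (simp add: elem_def add.commute add.left_commute)
  ultimately have "(of_real e - z1) * (of_real e - z2) \<noteq> 0"
    by (simp only: of_real_eq_0_iff not_False_eq_True)
  then show "z1 \<noteq> of_real e" "z2 \<noteq> of_real e" by auto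
qed

definition emb :: "complex \<Rightarrow> real \<Rightarrow> complex" where
  "emb t x = (if x \<in> K then THE y. \<exists>a\<in>\<rat>. \<exists>b\<in>\<rat>. \<exists>c\<in>\<rat>. x = elem a b c \<and> y = conjugate t a b c else 0)"

lemma emb_elem: "a \<in> \<rat> \<Longrightarrow> b \<in> \<rat> \<Longrightarrow> c \<in> \<rat> \<Longrightarrow> emb t (elem a b c) = conjugate t a b c"
  unfolding emb_def using elem_in elem_eq_iff by (auto intro!: the_equality)

lemma emb_in_embeddings:
  assumes "t \<in> roots"
  shows "emb t \<in> embeddings K"
proof -
  have t: "t ^ 3 = of_real a0 + of_real b0 * t + of_real c0 * t\<^sup>2" using assms roots_iff by blast
  have "emb t (x + y) = emb t x + emb t y \<and> emb t (x * y) = emb t x * emb t y"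
    if "x \<in> K" "y \<in> K" for x y
  proof -
    obtain a b c where x: "a \<in> \<rat>" "b \<in> \<rat>" "c \<in> \<rat>" "x = elem a b c" using \<open>x \<in> K\<close> by (rule elem_cases)
    obtain a' b' c' where y: "a' \<in> \<rat>" "b' \<in> \<rat>" "c' \<in> \<rat>" "y = elem a' b' c'" using \<open>y \<in> K\<close> by (rule elem_cases)
    show ?thesis
      unfolding x(4) y(4) elem_add elem_mult
      using x y min_poly_Rats cubic_reduce_mult[OF t, of a b c a' b' c']
      by (simp add: emb_elem conjugate_add) (simp add: conjugate_def)
  qed
  moreover have "emb t 1 = 1" using emb_elem[of 1 0 0 t] by (simp add: elem_def conjugate_def)
  ultimately show ?thesis by (auto simp: embeddings_def emb_def)
qed

lemma embedding_elem:
  assumes "\<sigma> \<in> embeddings K" "a \<in> \<rat>" "b \<in> \<rat>" "c \<in> \<rat>"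
  shows "\<sigma> (elem a b c) = conjugate (\<sigma> e) a b c"
proof -
  have e2: "e\<^sup>2 \<in> K" using subfield_real_power[OF subfield e_in] .
  have "\<sigma> (elem a b c) = \<sigma> a + \<sigma> b * \<sigma> e + \<sigma> c * \<sigma> (e\<^sup>2)"
    unfolding elem_def using assms(2-4) e_in e2 Rats_subset_subfield_real[OF subfield]
    by (simp add: embedding_add[OF assms(1)] embedding_mult[OF assms(1)] subfield_real_add
        subfield_real_mult subfield)
  moreover have "\<sigma> (e\<^sup>2) = (\<sigma> e)\<^sup>2"
    using embedding_mult[OF assms(1) e_in e_in] by (simp add: power2_eq_square)
  ultimately show ?thesis
    using embedding_Rats[OF subfield assms(1)] assms(2-4) by (simp add: conjugate_def)
qed

lemma embedding_root:
  assumes \<sigma>: "\<sigma> \<in> embeddings K"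
  shows "\<sigma> e \<in> roots"
proof -
  have "\<sigma> (e ^ 3) = \<sigma> e * \<sigma> (e * e)"
    using embedding_mult[OF \<sigma> e_in subfield_real_mult[OF subfield e_in e_in]]
    by (simp add: power3_eq_cube mult.assoc)
  then have "(\<sigma> e) ^ 3 = \<sigma> (e ^ 3)"
    using embedding_mult[OF \<sigma> e_in e_in] by (simp add: power3_eq_cube)
  also have "\<dots> = conjugate (\<sigma> e) a0 b0 c0"
    using min_poly embedding_elem[OF \<sigma> min_poly_Rats] by (simp add: elem_def)
  finally show ?thesis by (simp add: roots_iff conjugate_def)
qed

lemma embeddings_eq: "embeddings K = emb ` roots"
proof (intro equalityI subsetI)
  fix \<sigma> assume \<sigma>: "\<sigma> \<in> embeddings K"
  have "\<sigma> = emb (\<sigma> e)"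
  proof
    fix x show "\<sigma> x = emb (\<sigma> e) x"
    proof (cases "x \<in> K")
      case True
      then obtain a b c where "a \<in> \<rat>" "b \<in> \<rat>" "c \<in> \<rat>" "x = elem a b c" by (rule elem_cases)
      then show ?thesis using embedding_elem[OF \<sigma>] by (simp add: emb_elem)
    qed (simp add: embedding_outside[OF \<sigma>] emb_def)
  qed
  then show "\<sigma> \<in> emb ` roots" using embedding_root[OF \<sigma>] by blast
qed (auto intro: emb_in_embeddings)

lemma field_norm_elem:
  assumes "a \<in> \<rat>" "b \<in> \<rat>" "c \<in> \<rat>"
  shows "field_norm K (elem a b c) = of_real (elem a b c) * conjugate z1 a b c * conjugate z2 a b c"
proof -
  have "emb t e = t" for t using emb_elem[of 0 1 0 t] by (simp add: elem_def conjugate_def)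
  then have "inj_on emb roots" by (metis inj_onI)
  then have "field_norm K (elem a b c) = (\<Prod>t\<in>roots. emb t (elem a b c))"
    by (simp add: field_norm_def embeddings_eq prod.reindex)
  also have "\<dots> = conjugate (of_real e) a b c * conjugate z1 a b c * conjugate z2 a b c"
    using roots_distinct assms by (simp add: roots_def emb_elem mult.assoc)
  finally show ?thesis by (simp add: conjugate_def elem_def)
qed

section \<open>Elements with prescribed conjugates\<close>

lemma elem_pair_independent:
  assumes "a \<in> \<rat>" "b \<in> \<rat>" "c \<in> \<rat>" "a' \<in> \<rat>" "b' \<in> \<rat>" "c' \<in> \<rat>" "b * c' \<noteq> c * b'"
  shows "Q_lin_indep3 1 (elem a b c) (elem a' b' c')"
  unfolding Q_lin_indep3_def
proof (intro ballI impI)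
  fix x y w assume xyw: "x \<in> \<rat>" "y \<in> \<rat>" "w \<in> \<rat>" "x * 1 + y * elem a b c + w * elem a' b' c' = 0"
  then have "(x + y * a + w * a') * 1 + (y * b + w * b') * e + (y * c + w * c') * e\<^sup>2 = 0"
    by (simp add: elem_def algebra_simps)
  then have "x + y * a + w * a' = 0 \<and> y * b + w * b' = 0 \<and> y * c + w * c' = 0"
    by (rule Q_lin_indep3D[OF powers_indep, rotated 3]) (use xyw(1-3) assms(1-6) in simp_all)
  then have coeffs: "x + y * a + w * a' = 0" "y * b + w * b' = 0" "y * c + w * c' = 0" by simp_all
  have "y * (b * c' - c * b') = (y * b + w * b') * c' - (y * c + w * c') * b'"
    "w * (b * c' - c * b') = b * (y * c + w * c') - c * (y * b + w * b')"
    by (simp_all add: algebra_simps)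
  then have "y * (b * c' - c * b') = 0" "w * (b * c' - c * b') = 0"
    by (simp_all only: coeffs(2,3))
  with assms(7) have "y = 0" "w = 0" by simp_all
  with coeffs(1) show "x = 0 \<and> y = 0 \<and> w = 0" by simp
qed

lemma weight_elem:
  "a \<in> \<rat> \<Longrightarrow> b \<in> \<rat> \<Longrightarrow> c \<in> \<rat> \<Longrightarrow>
    weight K r (elem a b c) = elem a b c powr r / cmod (of_real (elem a b c) * conjugate z1 a b c * conjugate z2 a b c)"
  by (simp add: weight_def field_norm_elem)

text \<open>Real coordinates of the number \<open>v\<close> with respect to \<open>1, e, e\<^sup>2\<close> for which both complex
  conjugates equal \<open>w\<close>: they are \<open>w\<close> plus a multiple of the coordinates \<open>(qq, pp, 1)\<close> of the
  polynomial \<open>t\<^sup>2 + pp t + qq\<close> vanishing at \<open>z1\<close> and \<open>z2\<close>.\<close>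
definition twin_a :: "real \<Rightarrow> real \<Rightarrow> real" where
  "twin_a v w = w + (v - w) / elem qq pp 1 * qq"
definition twin_b :: "real \<Rightarrow> real \<Rightarrow> real" where
  "twin_b v w = (v - w) / elem qq pp 1 * pp"
definition twin_c :: "real \<Rightarrow> real \<Rightarrow> real" where
  "twin_c v w = (v - w) / elem qq pp 1"

lemma elem_twin: "elem (twin_a v w) (twin_b v w) (twin_c v w) = v"
proof -
  have "elem (w + k * qq) (k * pp) k = w + k * elem qq pp 1" for k
    by (simp add: elem_def algebra_simps)
  from this[of "(v - w) / elem qq pp 1"] show ?thesis
    using elem_qq_pp_nonzero by (simp add: twin_a_def twin_b_def twin_c_def)
qed

lemma conjugate_twin:
  assumes "t = z1 \<or> t = z2"
  shows "conjugate t (twin_a v w) (twin_b v w) (twin_c v w) = of_real w"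
proof -
  have "t\<^sup>2 + of_real pp * t + of_real qq = 0" using quadratic_factor[of t] assms by auto
  moreover have key: "conjugate t (w + k * qq) (k * pp) k = of_real w + of_real k * (t\<^sup>2 + of_real pp * t + of_real qq)"
    for k by (simp add: conjugate_def algebra_simps)
  ultimately show ?thesis unfolding twin_a_def twin_b_def twin_c_def key by simp
qed

lemma twin_shift:
  "twin_a (v + 1) (w + 1) = twin_a v w + 1" "twin_b (v + 1) (w + 1) = twin_b v w"
  "twin_c (v + 1) (w + 1) = twin_c v w"
  by (simp_all add: twin_a_def twin_b_def twin_c_def)

lemma elem_tendsto_twin:
  assumes "A \<longlonglongrightarrow> twin_a v w" "B \<longlonglongrightarrow> twin_b v w" "C \<longlonglongrightarrow> twin_c v w"
  shows "(\<lambda>n. elem (A n) (B n) (C n)) \<longlonglongrightarrow> v"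
proof -
  have "(\<lambda>n. elem (A n) (B n) (C n)) \<longlonglongrightarrow> elem (twin_a v w) (twin_b v w) (twin_c v w)"
    unfolding elem_def by (intro tendsto_add tendsto_mult assms tendsto_const)
  then show ?thesis by (simp only: elem_twin)
qed

lemma weight_tendsto_twin:
  assumes Rats: "\<And>n. A n \<in> \<rat>" "\<And>n. B n \<in> \<rat>" "\<And>n. C n \<in> \<rat>"
    and lim: "A \<longlonglongrightarrow> twin_a v w" "B \<longlonglongrightarrow> twin_b v w" "C \<longlonglongrightarrow> twin_c v w"
    and "v > 0" "w \<noteq> 0"
  shows "(\<lambda>n. weight K r (elem (A n) (B n) (C n))) \<longlonglongrightarrow> v powr r / (v * w\<^sup>2)"
proof -
  have elem: "(\<lambda>n. elem (A n) (B n) (C n)) \<longlonglongrightarrow> v" using lim by (rule elem_tendsto_twin)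
  have conj_lim: "(\<lambda>n. conjugate t (A n) (B n) (C n)) \<longlonglongrightarrow> conjugate t (twin_a v w) (twin_b v w) (twin_c v w)" for t
    unfolding conjugate_def by (intro tendsto_add tendsto_mult tendsto_of_real lim tendsto_const)
  then have conjugate: "(\<lambda>n. conjugate z1 (A n) (B n) (C n)) \<longlonglongrightarrow> of_real w"
    "(\<lambda>n. conjugate z2 (A n) (B n) (C n)) \<longlonglongrightarrow> of_real w"
    using conj_lim[of z1] conj_lim[of z2] conjugate_twin[of z1 v w] conjugate_twin[of z2 v w] by simp_all
  have "(\<lambda>n. elem (A n) (B n) (C n) powr r) \<longlonglongrightarrow> v powr r"
    using tendsto_powr[OF elem tendsto_const] \<open>v > 0\<close> by simp
  moreover have "(\<lambda>n. cmod (of_real (elem (A n) (B n) (C n)) * conjugate z1 (A n) (B n) (C n) * conjugate z2 (A n) (B n) (C n)))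
      \<longlonglongrightarrow> cmod (of_real v * of_real w * of_real w)"
    by (intro tendsto_norm tendsto_mult tendsto_of_real elem conjugate)
  ultimately have "(\<lambda>n. weight K r (elem (A n) (B n) (C n))) \<longlonglongrightarrow> v powr r / cmod (of_real v * of_real w * of_real w)"
    using \<open>v > 0\<close> \<open>w \<noteq> 0\<close> Rats by (simp add: weight_elem tendsto_divide)
  moreover have "cmod (of_real v * of_real w * of_real w) = v * w\<^sup>2"
    using \<open>v > 0\<close> by (simp add: norm_mult power2_eq_square mult.assoc abs_mult_self_eq)
  ultimately show ?thesis by simp
qed

text \<open>Perturbing the last coordinate of \<open>z\<close> keeps the \<open>2 \<times> 2\<close> minor \<open>b c' - c b'\<close> of the
  coordinates of \<open>u\<close> and \<open>z\<close> nonzero, which makes \<open>1, u, z\<close> independent.\<close>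
lemma independent_sequences:
  assumes "vu > 0" "vz > 0" "wu \<noteq> 0" "wu + 1 \<noteq> 0" "wz \<noteq> 0"
  obtains u z :: "nat \<Rightarrow> real" where
    "\<And>n. u n \<in> K" "\<And>n. z n \<in> K" "\<And>n. Q_lin_indep3 1 (u n) (z n)" "u \<longlonglongrightarrow> vu" "z \<longlonglongrightarrow> vz"
    "(\<lambda>n. weight K r (u n)) \<longlonglongrightarrow> vu powr r / (vu * wu\<^sup>2)"
    "(\<lambda>n. weight K r (u n + 1)) \<longlonglongrightarrow> (vu + 1) powr r / ((vu + 1) * (wu + 1)\<^sup>2)"
    "(\<lambda>n. weight K r (z n)) \<longlonglongrightarrow> vz powr r / (vz * wz\<^sup>2)"
proof -
  obtain A where A: "\<And>n. A n \<in> \<rat>" "\<And>n. A n \<noteq> 0" "A \<longlonglongrightarrow> twin_a vu wu"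
    using Rats_nonzero_tendsto[of "twin_a vu wu"] by blast
  obtain B where B: "\<And>n. B n \<in> \<rat>" "\<And>n. B n \<noteq> 0" "B \<longlonglongrightarrow> twin_b vu wu"
    using Rats_nonzero_tendsto[of "twin_b vu wu"] by blast
  obtain C where C: "\<And>n. C n \<in> \<rat>" "\<And>n. C n \<noteq> 0" "C \<longlonglongrightarrow> twin_c vu wu"
    using Rats_nonzero_tendsto[of "twin_c vu wu"] by blast
  obtain A' where A': "\<And>n. A' n \<in> \<rat>" "\<And>n. A' n \<noteq> 0" "A' \<longlonglongrightarrow> twin_a vz wz"
    using Rats_nonzero_tendsto[of "twin_a vz wz"] by blast
  obtain B' where B': "\<And>n. B' n \<in> \<rat>" "\<And>n. B' n \<noteq> 0" "B' \<longlonglongrightarrow> twin_b vz wz"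
    using Rats_nonzero_tendsto[of "twin_b vz wz"] by blast
  obtain C' where C': "\<And>n. C' n \<in> \<rat>" "\<And>n. C' n \<noteq> 0" "C' \<longlonglongrightarrow> twin_c vz wz"
    using Rats_nonzero_tendsto[of "twin_c vz wz"] by blast
  obtain C'' where C''_Rats_minor: "\<forall>n. C'' n \<in> \<rat> \<and> B n * C'' n \<noteq> C n * B' n"
    and C'': "C'' \<longlonglongrightarrow> twin_c vz wz"
    using Rats_tendsto_perturb[where \<beta> = B and \<gamma> = "\<lambda>n. C n * B' n", OF C'(1,3) B(2)]
    by (elim exE conjE) (rule that)
  then have C''_Rats: "C'' n \<in> \<rat>" and minor: "B n * C'' n \<noteq> C n * B' n" for n by simp_all
  have A1: "(\<lambda>n. A n + 1) \<longlonglongrightarrow> twin_a (vu + 1) (wu + 1)"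
    using tendsto_add[OF A(3) tendsto_const, of 1] by (simp add: twin_shift)
  have B1: "B \<longlonglongrightarrow> twin_b (vu + 1) (wu + 1)" and C1: "C \<longlonglongrightarrow> twin_c (vu + 1) (wu + 1)"
    using B(3) C(3) by (simp_all add: twin_shift)
  have shift: "elem (A n) (B n) (C n) + 1 = elem (A n + 1) (B n) (C n)" for n
    by (simp add: elem_def)
  show thesis
  proof (rule that[of "\<lambda>n. elem (A n) (B n) (C n)" "\<lambda>n. elem (A' n) (B' n) (C'' n)"])
    show "elem (A n) (B n) (C n) \<in> K" "elem (A' n) (B' n) (C'' n) \<in> K" for n
      using A(1) B(1) C(1) A'(1) B'(1) C''_Rats by (simp_all add: elem_in)
    show "Q_lin_indep3 1 (elem (A n) (B n) (C n)) (elem (A' n) (B' n) (C'' n))" for n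
      using A(1) B(1) C(1) A'(1) B'(1) C''_Rats minor by (simp add: elem_pair_independent)
    show "(\<lambda>n. elem (A n) (B n) (C n)) \<longlonglongrightarrow> vu" "(\<lambda>n. elem (A' n) (B' n) (C'' n)) \<longlonglongrightarrow> vz"
      using A(3) B(3) C(3) A'(3) B'(3) C'' by (simp_all add: elem_tendsto_twin)
    show "(\<lambda>n. weight K r (elem (A n) (B n) (C n))) \<longlonglongrightarrow> vu powr r / (vu * wu\<^sup>2)"
      using A(1,3) B(1,3) C(1,3) assms by (intro weight_tendsto_twin) auto
    show "(\<lambda>n. weight K r (elem (A n) (B n) (C n) + 1)) \<longlonglongrightarrow> (vu + 1) powr r / ((vu + 1) * (wu + 1)\<^sup>2)"
      unfolding shift using A(1) B(1) C(1) A1 B1 C1 assms by (intro weight_tendsto_twin) auto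
    show "(\<lambda>n. weight K r (elem (A' n) (B' n) (C'' n))) \<longlonglongrightarrow> vz powr r / (vz * wz\<^sup>2)"
      using A'(1,3) B'(1,3) C''_Rats C'' assms by (intro weight_tendsto_twin) auto
  qed
qed

text \<open>Both conjugates of \<open>u\<close> are near \<open>1\<close> and those of \<open>z\<close> are large, so \<open>z\<close> has the
  smallest weight.\<close>
lemma exists_pair_z_lightest:
  fixes vu :: real
  assumes "vu > 0"
  obtains u z where "u \<in> K" "z \<in> K" "u > 0" "z > 0" "Q_lin_indep3 1 u z"
    "weight K r z < weight K r (u + 1)" "weight K r z < 1" "weight K r z < weight K r u"
    "1 < vu \<Longrightarrow> 1 < u" "vu < 1 \<Longrightarrow> u < 1"
proof -
  define m where "m = min 1 (min (vu powr r / (vu * 1\<^sup>2)) ((vu + 1) powr r / ((vu + 1) * (1 + 1)\<^sup>2)))"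
  have "m > 0" using assms by (simp add: m_def)
  define wz where "wz = sqrt (2 / m)"
  have "wz \<noteq> 0" using \<open>m > 0\<close> by (simp add: wz_def)
  have "1 powr r / (1 * wz\<^sup>2) = m / 2" using \<open>m > 0\<close> by (simp add: wz_def)
  moreover have "m \<le> (vu + 1) powr r / ((vu + 1) * (1 + 1)\<^sup>2)" "m \<le> 1" "m \<le> vu powr r / (vu * 1\<^sup>2)"
    unfolding m_def by linarith+
  ultimately have lim_less: "1 powr r / (1 * wz\<^sup>2) < (vu + 1) powr r / ((vu + 1) * (1 + 1)\<^sup>2)"
    "1 powr r / (1 * wz\<^sup>2) < 1" "1 powr r / (1 * wz\<^sup>2) < vu powr r / (vu * 1\<^sup>2)"
    using \<open>m > 0\<close> by linarith+
  obtain u z where seq: "\<And>n. u n \<in> K" "\<And>n. z n \<in> K" "\<And>n. Q_lin_indep3 1 (u n) (z n)"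
    "u \<longlonglongrightarrow> vu" "z \<longlonglongrightarrow> 1"
    "(\<lambda>n. weight K r (u n)) \<longlonglongrightarrow> vu powr r / (vu * 1\<^sup>2)"
    "(\<lambda>n. weight K r (u n + 1)) \<longlonglongrightarrow> (vu + 1) powr r / ((vu + 1) * (1 + 1)\<^sup>2)"
    "(\<lambda>n. weight K r (z n)) \<longlonglongrightarrow> 1 powr r / (1 * wz\<^sup>2)"
    using independent_sequences[of vu 1 1 wz] assms \<open>wz \<noteq> 0\<close> by auto
  have "eventually (\<lambda>n. u n > 0 \<and> z n > 0 \<and> weight K r (z n) < weight K r (u n + 1) \<and>
      weight K r (z n) < 1 \<and> weight K r (z n) < weight K r (u n) \<and>
      (1 < vu \<longrightarrow> 1 < u n) \<and> (vu < 1 \<longrightarrow> u n < 1)) sequentially"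
    using order_tendstoD(1)[OF seq(4) assms] order_tendstoD(1)[OF seq(5) zero_less_one]
      tendsto_less_eventually[OF seq(8) seq(7) lim_less(1)]
      tendsto_less_eventually[OF seq(8) tendsto_const lim_less(2)]
      tendsto_less_eventually[OF seq(8) seq(6) lim_less(3)] tendsto_eventually_same_side[OF seq(4), of 1]
    by eventually_elim auto
  then obtain n where "u n > 0" "z n > 0" "weight K r (z n) < weight K r (u n + 1)"
    "weight K r (z n) < 1" "weight K r (z n) < weight K r (u n)"
    "1 < vu \<longrightarrow> 1 < u n" "vu < 1 \<longrightarrow> u n < 1"
    by (auto simp: eventually_sequentially)
  with seq(1-3) show thesis by (intro that[of "u n" "z n"]) auto
qed

text \<open>The conjugates of \<open>u\<close> are near \<open>-2\<close>, so those of \<open>u + 1\<close> are near \<open>-1\<close>; with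
  \<open>u \<approx> 1\<close> this gives weights near \<open>1/4\<close> for \<open>u\<close> and \<open>2\<^sup>r/2\<close> for \<open>u + 1\<close>, and the
  conjugates of \<open>z\<close> are tuned to give \<open>z\<close> a weight near \<open>1/2\<close>.\<close>
lemma exists_pair_u_lightest:
  fixes vz :: real
  assumes "r > 0" "vz > 0"
  obtains u z where "u \<in> K" "z \<in> K" "u > 0" "z > 0" "Q_lin_indep3 1 u z"
    "weight K r z < weight K r (u + 1)" "weight K r z < 1" "weight K r u < 1" "weight K r u < weight K r z"
    "1 < vz \<Longrightarrow> 1 < z" "vz < 1 \<Longrightarrow> z < 1"
proof -
  define wz where "wz = sqrt (2 * vz powr r / vz)"
  have "wz \<noteq> 0" using assms by (simp add: wz_def)
  have limits: "1 powr r / (1 * (- 2)\<^sup>2) = (1 / 4 :: real)"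
    "(1 + 1) powr r / ((1 + 1) * (- 2 + 1)\<^sup>2) = (2 :: real) powr r / 2"
    "vz powr r / (vz * wz\<^sup>2) = 1 / 2"
    using assms by (simp_all add: wz_def)
  have "(2 :: real) powr r > 1" using assms by simp
  then have lim_less: "1 / 2 < (2 :: real) powr r / 2" "1 / 2 < (1 :: real)" "1 / 4 < (1 :: real)" "1 / 4 < (1 / 2 :: real)"
    by simp_all
  obtain u z where seq: "\<And>n. u n \<in> K" "\<And>n. z n \<in> K" "\<And>n. Q_lin_indep3 1 (u n) (z n)"
    "u \<longlonglongrightarrow> 1" "z \<longlonglongrightarrow> vz"
    "(\<lambda>n. weight K r (u n)) \<longlonglongrightarrow> 1 / 4"
    "(\<lambda>n. weight K r (u n + 1)) \<longlonglongrightarrow> 2 powr r / 2"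
    "(\<lambda>n. weight K r (z n)) \<longlonglongrightarrow> 1 / 2"
    using independent_sequences[where vu = 1 and wu = "- 2" and r = r, of vz wz] assms \<open>wz \<noteq> 0\<close> unfolding limits by auto
  have "eventually (\<lambda>n. u n > 0 \<and> z n > 0 \<and> weight K r (z n) < weight K r (u n + 1) \<and>
      weight K r (z n) < 1 \<and> weight K r (u n) < 1 \<and> weight K r (u n) < weight K r (z n) \<and>
      (1 < vz \<longrightarrow> 1 < z n) \<and> (vz < 1 \<longrightarrow> z n < 1)) sequentially"
    using order_tendstoD(1)[OF seq(4) zero_less_one] order_tendstoD(1)[OF seq(5) assms(2)]
      tendsto_less_eventually[OF seq(8) seq(7) lim_less(1)]
      tendsto_less_eventually[OF seq(8) tendsto_const lim_less(2)]
      tendsto_less_eventually[OF seq(6) tendsto_const lim_less(3)]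
      tendsto_less_eventually[OF seq(6) seq(8) lim_less(4)] tendsto_eventually_same_side[OF seq(5), of 1]
    by eventually_elim auto
  then obtain n where "u n > 0" "z n > 0" "weight K r (z n) < weight K r (u n + 1)"
    "weight K r (z n) < 1" "weight K r (u n) < 1" "weight K r (u n) < weight K r (z n)"
    "1 < vz \<longrightarrow> 1 < z n" "vz < 1 \<longrightarrow> z n < 1"
    by (auto simp: eventually_sequentially)
  with seq(1-3) show thesis by (intro that[of "u n" "z n"]) auto
qed

lemma exists_step_weights:
  fixes r :: real
  assumes "r > 0" and ij: "(i, j) \<in> Ind" and "(k, l) \<in> Ind"
    and "(k, l) \<noteq> (i, theta i j)" "(k, l) \<noteq> (theta i j, i)"
  obtains Y :: "nat \<Rightarrow> real" where "\<And>m. m < 3 \<Longrightarrow> Y m \<in> K" "\<And>m. m < 3 \<Longrightarrow> Y m > 0" "Y j = 1"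
    "Q_lin_indep3 1 (Y i) (Y (theta i j))"
    "weight K r (Y (theta i j)) < weight K r (Y i + 1)" "weight K r (Y (theta i j)) < 1"
    "weight K r (Y (theta k l)) < weight K r (Y k)" "weight K r (Y (theta k l)) < weight K r (Y l)"
    "Y l \<le> Y k"
proof -
  note ij_facts = theta_facts[OF ij]
  define Y where "Y u z m = (if m = i then u else if m = j then 1 else z)" for u z :: real and m
  have Y: "Y u z i = u" "Y u z j = 1" "Y u z (theta i j) = z" for u z
    using ij_facts by (simp_all add: Y_def)
  have Y_in: "Y u z m \<in> K" "Y u z m > 0" if "u \<in> K" "z \<in> K" "u > 0" "z > 0" for u z m
    using that subfield_real_one[OF subfield] by (simp_all add: Y_def)
  consider "(k, l) = (i, j) \<or> (k, l) = (j, i)" | "(k, l) = (j, theta i j) \<or> (k, l) = (theta i j, j)"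
    using Ind_cases_after_step assms(2-5) by blast
  then show thesis
  proof cases
    case 1
    define vu :: real where "vu = (if (k, l) = (i, j) then 2 else 1 / 2)"
    have "vu > 0" by (simp add: vu_def)
    obtain u z where uz: "u \<in> K" "z \<in> K" "u > 0" "z > 0" "Q_lin_indep3 1 u z"
      "weight K r z < weight K r (u + 1)" "weight K r z < 1" "weight K r z < weight K r u"
      "1 < vu \<Longrightarrow> 1 < u" "vu < 1 \<Longrightarrow> u < 1"
      using exists_pair_z_lightest[where r = r, OF \<open>vu > 0\<close>] by blast
    show thesis
      by (rule that[of "Y u z"]) (use 1 uz Y Y_in vu_def ij_facts theta_eqs[OF ij] in \<open>auto simp: weight_one\<close>)
  next
    case 2
    define vz :: real where "vz = (if (k, l) = (theta i j, j) then 2 else 1 / 2)"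
    have "vz > 0" by (simp add: vz_def)
    obtain u z where uz: "u \<in> K" "z \<in> K" "u > 0" "z > 0" "Q_lin_indep3 1 u z"
      "weight K r z < weight K r (u + 1)" "weight K r z < 1" "weight K r u < 1" "weight K r u < weight K r z"
      "1 < vz \<Longrightarrow> 1 < z" "vz < 1 \<Longrightarrow> z < 1"
      using exists_pair_u_lightest[OF \<open>r > 0\<close> \<open>vz > 0\<close>] by blast
    show thesis
      by (rule that[of "Y u z"]) (use 2 uz Y Y_in vz_def ij_facts theta_eqs[OF ij] in \<open>auto simp: weight_one\<close>)
  qed
qed

end

theorem theorem2p7:
  fixes K :: "real set" and p q :: nat and i j k l :: nat
  assumes "real_cubic_field K"
    and "p > 0" and "q > 0" and "coprime p q" and "\<not> 3 dvd p"
    and "(i, j) \<in> Ind" and "(k, l) \<in> Ind"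
    and "(k, l) \<noteq> (i, theta i j)" and "(k, l) \<noteq> (theta i j, i)"
  shows "\<exists>(a, b)\<in>Delta_K K.
           eps_is K (real p / real q) a b (i, j) \<and>
           (case Tmap (i, j) (a, b) of (a', b') \<Rightarrow> eps_is K (real p / real q) a' b' (k, l))"
proof -
  \<comment> \<open>Only \<open>r > 0\<close> is used: the conditions on \<open>p\<close> make the maximum of the \<open>v\<close> unique on all
    of \<open>\<Delta>\<^sub>K\<close>, whereas \<open>eps_is\<close> asks for a strict maximum at the chosen point only.\<close>
  obtain e a0 b0 c0 where "cubic_generator K e a0 b0 c0"
    using assms(1) by (rule real_cubic_field_generator)
  moreover have "real p / real q > 0" using assms(2,3) by simp
  ultimately obtain Y where "\<And>m. m < 3 \<Longrightarrow> Y m \<in> K" "\<And>m. m < 3 \<Longrightarrow> Y m > 0" "Y j = 1"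
    "Q_lin_indep3 1 (Y i) (Y (theta i j))"
    "weight K (real p / real q) (Y (theta i j)) < weight K (real p / real q) (Y i + 1)"
    "weight K (real p / real q) (Y (theta i j)) < 1"
    "weight K (real p / real q) (Y (theta k l)) < weight K (real p / real q) (Y k)"
    "weight K (real p / real q) (Y (theta k l)) < weight K (real p / real q) (Y l)"
    "Y l \<le> Y k"
    using cubic_generator.exists_step_weights assms(6-9) by blast
  moreover have "subfield_real K" using assms(1) by (simp add: real_cubic_field_def)
  ultimately show ?thesis using eps_step_exists assms(6,7) by blast
qed

end
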